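(* Let $D$ be a weakly connected digraph with $n>2$ nodes. Then the burning number of $D$ is at most $n-1$, and this bound is sharp: for every $n>2$ there is a weakly connected digraph with $n$ nodes whose burning number is $n-1$.
   Context: Burning process on a digraph $D$: a sequence $(x_1,\ldots,x_b)$ of nodes is a burning sequence for $D$ if after $b$ steps of the following process every node of $D$ is burned; the $i$-th step consists of first burning all out-neighbours of all currently burned nodes, and then burning the node $x_i$. The burning number of $D$ is the length of a shortest burning sequence. Equivalently, with $N^+_k(v)$ the set of nodes reachable from $v$ by a directed path with at most $k$ arcs, the burning number is the least $b$ such that there are nodes $v_1,\ldots,v_b$ with $V(D)=\bigcup_{i=1}^b N^+_{i-1}(v_i)$. *)

theory Defs
  imports "Graph_Theory.Digraph" "Graph_Theory.Digraph_Component"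
begin

definition out_ball :: "('a,'b) pre_digraph \<Rightarrow> nat \<Rightarrow> 'a \<Rightarrow> 'a set" where
  "out_ball G k v = {w. \<exists>j\<le>k. (v, w) \<in> (arcs_ends G) ^^ j}"

text \<open>A burning sequence (in the covering formulation): nodes v_1..v_b
(list index i = v_(i+1)) with V = union of N^+_(i-1)(v_i).\<close>
definition burning_seq :: "('a,'b) pre_digraph \<Rightarrow> 'a list \<Rightarrow> bool" where
  "burning_seq G xs \<longleftrightarrow> set xs \<subseteq> verts G \<and>
     verts G = (\<Union>i<length xs. out_ball G i (xs ! i))"

definition burning_number :: "('a,'b) pre_digraph \<Rightarrow> nat" where
  "burning_number G = (LEAST b. \<exists>xs. length xs = b \<and> burning_seq G xs)"

end

theory Submission
  imports Defs
begin

text \<open>A weakly connected digraph on n > 2 nodes has an arc uv with u \<noteq> v. Lighting u first,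
  fire reaches v in the next round while the other n - 2 nodes are lit one per round, so n - 1
  rounds suffice. Conversely, fire never spreads into a source, so every source has to be lit
  by hand; the in-star on n nodes has n - 1 sources.\<close>

lemma center_in_out_ball: "v \<in> out_ball G k v"
  unfolding out_ball_def by force

lemma head_in_out_ball:
  assumes "e \<in> arcs G" "0 < k"
  shows "head G e \<in> out_ball G k (tail G e)"
proof -
  have "(tail G e, head G e) \<in> arcs_ends G ^^ 1"
    using assms(1) by (simp add: arcs_ends_conv)
  then show ?thesis
    unfolding out_ball_def using assms(2) by (auto intro!: exI[of _ 1])
qed

lemma out_ball_cases:
  assumes "w \<in> out_ball G k v"
  shows "w = v \<or> (\<exists>e\<in>arcs G. head G e = w)"
proof -
  from assms obtain j where "(v, w) \<in> arcs_ends G ^^ j"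
    unfolding out_ball_def by blast
  then have "(v, w) \<in> (arcs_ends G)\<^sup>*"
    by (rule relpow_imp_rtrancl)
  then show ?thesis
    by (cases rule: rtranclE) (auto simp: arcs_ends_conv)
qed

lemma (in wf_digraph) out_ball_subset_verts:
  assumes "v \<in> verts G"
  shows "out_ball G k v \<subseteq> verts G"
  using assms out_ball_cases by fastforce

lemma out_ball_source_iff:
  assumes "in_arcs G v = {}"
  shows "v \<in> out_ball G k u \<longleftrightarrow> u = v"
proof
  assume "v \<in> out_ball G k u"
  moreover have "\<not> (\<exists>e\<in>arcs G. head G e = v)"
    using assms by (simp add: in_arcs_def)
  ultimately show "u = v"
    using out_ball_cases by metis
qed (simp add: center_in_out_ball)

lemma (in wf_digraph) burning_seqI:
  assumes "set xs \<subseteq> verts G"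
    and "\<And>v. v \<in> verts G \<Longrightarrow> \<exists>i<length xs. v \<in> out_ball G i (xs ! i)"
  shows "burning_seq G xs"
proof -
  have "out_ball G i (xs ! i) \<subseteq> verts G" if "i < length xs" for i
    using assms(1) nth_mem[OF that] by (intro out_ball_subset_verts) blast
  then show ?thesis
    unfolding burning_seq_def using assms by blast
qed

lemma (in wf_digraph) burning_seq_of_set_eq_verts:
  assumes "set xs = verts G"
  shows "burning_seq G xs"
proof (rule burning_seqI)
  fix v assume "v \<in> verts G"
  then obtain i where i: "i < length xs" "xs ! i = v"
    using assms by (metis in_set_conv_nth)
  then have "v \<in> out_ball G i (xs ! i)"
    using center_in_out_ball by simp
  with i(1) show "\<exists>i<length xs. v \<in> out_ball G i (xs ! i)"
    by blast
qed (simp add: assms)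

lemma burning_number_le:
  assumes "burning_seq G xs"
  shows "burning_number G \<le> length xs"
  unfolding burning_number_def using assms by (blast intro: Least_le)

lemma burning_number_attained:
  assumes "burning_seq G xs"
  obtains ys where "length ys = burning_number G" "burning_seq G ys"
proof -
  have "\<exists>ys. length ys = burning_number G \<and> burning_seq G ys"
    unfolding burning_number_def
    by (rule LeastI_ex[where P = "\<lambda>b. \<exists>ys. length ys = b \<and> burning_seq G ys"])
      (use assms in blast)
  then show ?thesis
    using that by blast
qed

lemma (in fin_digraph) card_sources_le_burning_number:
  "card {v \<in> verts G. in_arcs G v = {}} \<le> burning_number G"
proof -
  obtain xs where "set xs = verts G"
    using finite_list finite_verts by blast
  then obtain ys where ys: "length ys = burning_number G" "burning_seq G ys"
    by (rule burning_number_attained[OF burning_seq_of_set_eq_verts])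
  have "{v \<in> verts G. in_arcs G v = {}} \<subseteq> set ys"
  proof
    fix v assume "v \<in> {v \<in> verts G. in_arcs G v = {}}"
    then have v: "v \<in> verts G" "in_arcs G v = {}"
      by simp_all
    then obtain i where i: "i < length ys" "v \<in> out_ball G i (ys ! i)"
      using ys(2) unfolding burning_seq_def by blast
    then have "ys ! i = v"
      using out_ball_source_iff[OF v(2)] by simp
    with i(1) show "v \<in> set ys"
      using nth_mem by blast
  qed
  then have "card {v \<in> verts G. in_arcs G v = {}} \<le> card (set ys)"
    by (intro card_mono) auto
  also have "\<dots> \<le> burning_number G"
    using card_length[of ys] ys(1) by simp
  finally show ?thesis .
qed

lemma connected_has_proper_arc:
  assumes "connected G" "u \<in> verts G" "v \<in> verts G" "u \<noteq> v"
  shows "\<exists>e\<in>arcs G. tail G e \<noteq> head G e"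
proof (rule ccontr)
  assume no_proper_arc: "\<not> (\<exists>e\<in>arcs G. tail G e \<noteq> head G e)"
  have "u \<rightarrow>\<^sup>*\<^bsub>mk_symmetric G\<^esub> v"
    using assms(1-3) unfolding connected_def strongly_connected_def by auto
  then have "(u, v) \<in> (parcs (mk_symmetric G))\<^sup>*"
    by (auto dest: reachable_rtranclI)
  moreover have "parcs (mk_symmetric G) \<subseteq> Id"
    using no_proper_arc by (auto simp: parcs_mk_symmetric)
  ultimately show False
    using rtrancl_mono[of _ Id] rtrancl__Id assms(4) by blast
qed

lemma (in fin_digraph) burning_number_le_card_minus_one:
  assumes "e \<in> arcs G" "tail G e \<noteq> head G e" "2 < card (verts G)"
  shows "burning_number G \<le> card (verts G) - 1"
proof -
  define u w where "u = tail G e" and "w = head G e"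
  have uw: "u \<in> verts G" "w \<in> verts G" "u \<noteq> w"
    using assms(1,2) unfolding u_def w_def by auto
  obtain ys where ys: "set ys = verts G - {u, w}" "distinct ys"
    using finite_distinct_list finite_verts by blast
  have "length ys = card (verts G - {u, w})"
    using distinct_card[OF ys(2)] ys(1) by simp
  also have "\<dots> = card (verts G) - 2"
    using uw by (subst card_Diff_subset) auto
  finally have len_ys: "length ys = card (verts G) - 2" .
  \<comment> \<open>The node at list index i burns with radius i, so u, placed last, is lit first.\<close>
  define xs where "xs = ys @ [u]"
  have last: "length ys < length xs" "xs ! length ys = u"
    by (simp_all add: xs_def)
  have "burning_seq G xs"
  proof (rule burning_seqI)
    show "set xs \<subseteq> verts G"
      using ys(1) uw(1) by (auto simp: xs_def)
  next
    fix v assume "v \<in> verts G"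
    then consider "v \<in> set ys" | "v = u" | "v = w"
      using ys(1) by blast
    then show "\<exists>i<length xs. v \<in> out_ball G i (xs ! i)"
    proof cases
      case 1
      then obtain i where i: "i < length ys" "ys ! i = v"
        by (auto simp: in_set_conv_nth)
      then have "v \<in> out_ball G i (xs ! i)"
        using center_in_out_ball by (simp add: xs_def nth_append)
      moreover have "i < length xs"
        using i(1) by (simp add: xs_def)
      ultimately show ?thesis
        by blast
    next
      case 2
      then have "v \<in> out_ball G (length ys) (xs ! length ys)"
        using last(2) center_in_out_ball by simp
      with last(1) show ?thesis
        by blast
    next
      case 3
      have "0 < length ys"
        using len_ys assms(3) by simp
      then have "v \<in> out_ball G (length ys) (xs ! length ys)"
        using 3 last(2) head_in_out_ball[OF assms(1)] unfolding u_def w_def by simp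
      with last(1) show ?thesis
        by blast
    qed
  qed
  moreover have "length xs = card (verts G) - 1"
    using len_ys assms(3) by (simp add: xs_def)
  ultimately show ?thesis
    using burning_number_le by metis
qed

lemma connected_burning_number_le_card_minus_one:
  assumes "fin_digraph G" "connected G" "2 < card (verts G)"
  shows "burning_number G \<le> card (verts G) - 1"
proof -
  have "\<not> card (verts G) \<le> Suc 0"
    using assms(3) by simp
  then have "\<not> (\<forall>u\<in>verts G. \<forall>v\<in>verts G. u = v)"
    using card_le_Suc0_iff_eq[OF fin_digraph.finite_verts[OF assms(1)]] by metis
  then obtain u v where "u \<in> verts G" "v \<in> verts G" "u \<noteq> v"
    by blast
  then obtain e where e: "e \<in> arcs G" "tail G e \<noteq> head G e"
    using connected_has_proper_arc assms(2) by metis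
  show ?thesis
    by (rule fin_digraph.burning_number_le_card_minus_one[OF assms(1) e assms(3)])
qed

lemma (in wf_digraph) connected_if_all_dominate:
  assumes "r \<in> verts G" "\<And>v. v \<in> verts G \<Longrightarrow> v \<noteq> r \<Longrightarrow> v \<rightarrow>\<^bsub>G\<^esub> r"
  shows "connected G"
proof -
  let ?R = "rtrancl_on (verts G) (parcs (mk_symmetric G))"
  have "(v, r) \<in> ?R \<and> (r, v) \<in> ?R" if "v \<in> verts G" for v
  proof (cases "v = r")
    case False
    then have "(v, r) \<in> parcs (mk_symmetric G)" "(r, v) \<in> parcs (mk_symmetric G)"
      using assms(2)[OF that] by (auto simp: parcs_mk_symmetric arcs_ends_conv)
    then show ?thesis
      using that assms(1) by (auto intro: rtrancl_on_into_rtrancl_on)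
  qed (simp add: assms(1) rtrancl_on_refl)
  then have "(u, v) \<in> ?R" if "u \<in> verts G" "v \<in> verts G" for u v
    using that rtrancl_on_trans by metis
  then show ?thesis
    unfolding connected_def strongly_connected_def reachable_def
    using assms(1) by auto
qed

definition in_star :: "nat \<Rightarrow> (nat, nat) pre_digraph" where
  "in_star n = \<lparr>verts = {0..<n}, arcs = {1..<n}, tail = id, head = (\<lambda>_. 0)\<rparr>"

lemma fin_digraph_in_star: "fin_digraph (in_star n)"
  by (auto simp: in_star_def fin_digraph_def fin_digraph_axioms_def wf_digraph_def)

lemma loopfree_digraph_in_star: "loopfree_digraph (in_star n)"
  by (auto simp: in_star_def loopfree_digraph_def loopfree_digraph_axioms_def wf_digraph_def)

lemma nomulti_digraph_in_star: "nomulti_digraph (in_star n)"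
  by (auto simp: in_star_def nomulti_digraph_def nomulti_digraph_axioms_def wf_digraph_def
      arc_to_ends_def)

lemma connected_in_star:
  assumes "0 < n"
  shows "connected (in_star n)"
proof (rule wf_digraph.connected_if_all_dominate)
  show "wf_digraph (in_star n)"
    using fin_digraph_in_star by (rule fin_digraph.axioms)
  show "0 \<in> verts (in_star n)"
    using assms by (simp add: in_star_def)
  show "v \<rightarrow>\<^bsub>in_star n\<^esub> 0" if "v \<in> verts (in_star n)" "v \<noteq> 0" for v
    using that by (auto simp: in_star_def arcs_ends_conv)
qed

lemma card_verts_in_star: "card (verts (in_star n)) = n"
  by (simp add: in_star_def)

lemma in_star_leaves_are_sources:
  "{1..<n} \<subseteq> {v \<in> verts (in_star n). in_arcs (in_star n) v = {}}"
  by (auto simp: in_star_def in_arcs_def)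

lemma burning_number_in_star:
  assumes "2 < n"
  shows "burning_number (in_star n) = n - 1"
proof (rule antisym)
  show "burning_number (in_star n) \<le> n - 1"
    using connected_burning_number_le_card_minus_one[OF fin_digraph_in_star connected_in_star]
      assms card_verts_in_star by simp
  have "n - 1 = card {1..<n}"
    by simp
  also have "\<dots> \<le> card {v \<in> verts (in_star n). in_arcs (in_star n) v = {}}"
    by (rule card_mono[OF _ in_star_leaves_are_sources]) (simp add: in_star_def)
  also have "\<dots> \<le> burning_number (in_star n)"
    by (rule fin_digraph.card_sources_le_burning_number[OF fin_digraph_in_star])
  finally show "n - 1 \<le> burning_number (in_star n)" .
qed

theorem mainTheorem2:
  shows "(\<forall>G :: ('a,'b) pre_digraph. fin_digraph G \<and> connected G \<and> card (verts G) > 2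
            \<longrightarrow> burning_number G \<le> card (verts G) - 1)
    \<and> (\<forall>n::nat. n > 2 \<longrightarrow> (\<exists>G :: (nat,nat) pre_digraph.
            fin_digraph G \<and> loopfree_digraph G \<and> nomulti_digraph G \<and> connected G
            \<and> card (verts G) = n \<and> burning_number G = n - 1))"
proof (intro conjI allI impI)
  fix G :: "('a,'b) pre_digraph"
  assume "fin_digraph G \<and> connected G \<and> card (verts G) > 2"
  then show "burning_number G \<le> card (verts G) - 1"
    using connected_burning_number_le_card_minus_one by blast
next
  fix n :: nat
  assume "n > 2"
  then show "\<exists>G :: (nat,nat) pre_digraph.
      fin_digraph G \<and> loopfree_digraph G \<and> nomulti_digraph G \<and> connected G
      \<and> card (verts G) = n \<and> burning_number G = n - 1"
    using fin_digraph_in_star loopfree_digraph_in_star nomulti_digraph_in_star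
      connected_in_star card_verts_in_star burning_number_in_star
    by (intro exI[of _ "in_star n"]) simp
qed

end
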